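(* Let $\Sigma$ be a finite closure and let $\chi\in\Sigma$ be $\mathbf{PTKv}^{\ast}(\Sigma)$-consistent, i.e. $\mathbf{PTKv}^{\ast}(\Sigma)\nvdash\neg\chi$. Then there exists $\Gamma\in\mathsf{Type}^{\ast}(\Sigma)$ with $\chi\in\Gamma$.
   Context: Language and proof systems. Fix countable sets $\mathsf{Prop}$ (propositional variables), $\mathsf{Term}$ (atomic terms) and a finite set of agents $\mathcal{A}$. $\Theta_K=[0,1]\cap\mathbb{Q}$, $\Theta_V^+=(\frac12,1]\cap\mathbb{Q}$. Formulas: $\varphi::= p\mid t=s\mid\neg\varphi\mid(\varphi\to\psi)\mid K_i^\theta\varphi\mid Kv_i^\eta(t)$ ($\theta\in\Theta_K$, $\eta\in\Theta_V^+$). $\mathbf{PTKv}^{+}$ is the Hilbert system with rules Modus Ponens and $\mathrm{Nec}_K$ (from $\varphi$ infer $K_i^\theta\varphi$) and axiom schemata: propositional tautologies; $t=t$; $t=s\to s=t$; $(t=s\wedge s=u)\to t=u$; $t=s\to((t=u)\leftrightarrow(s=u))$; $K_i^{\theta'}\varphi\to K_i^\theta\varphi$ ($\theta\le\theta'$); $K_i^\alpha(\varphi\to\psi)\to(K_i^\beta\varphi\to K_i^{\max\{0,\alpha+\beta-1\}}\psi)$; $K_i^\alpha\varphi\to\neg K_i^\beta\neg\varphi$ ($\alpha+\beta>1$); $K_i^0\varphi$; $K_i^1(t=s)\to(K_i^\theta(t=u)\leftrightarrow K_i^\theta(s=u))$; $K_i^1(t=s)\to(Kv_i^\eta(t)\leftrightarrow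 Kv_i^\eta(s))$; $K_i^1(\varphi\leftrightarrow\psi)\to(K_i^\theta\varphi\leftrightarrow K_i^\theta\psi)$; $K_i^\alpha\varphi\wedge K_i^\beta\psi\wedge K_i^1\neg(\varphi\wedge\psi)\to K_i^{\alpha+\beta}(\varphi\vee\psi)$ ($\alpha+\beta\le1$); $Kv_i^\eta(t)\to Kv_i^\zeta(t)$ ($\zeta\le\eta$, both in $\Theta_V^+$). Finite closure: a finite set $\Sigma$ of formulas closed under subformulas and single negations (if $\varphi\in\Sigma$ then $\neg\varphi\in\Sigma$ unless $\varphi$ is itself a negation $\neg\psi$ with $\psi\in\Sigma$), containing $t=s$ and $\neg(t=s)$ for all $t,s\in T_\Sigma$ (the set of atomic terms occurring in $\Sigma$), with all thresholds from a finite set of rationals. $\mathsf{Type}(\Sigma)$ is the set of $\Gamma\subseteq\Sigma$ that are $\mathbf{PTKv}^{+}$-consistent ($\mathbf{PTKv}^{+}\nvdash\neg\bigwedge\Gamma$) and saturated (for each $\varphi\in\Sigma$, $\varphi\in\Gamma$ or $\neg\varphi\in\Gamma$). Constraint systems. Let $K=\{1,\dots,|T_\Sigma|\}$. For $\Delta\in\mathsf{Type}(\Sigma)$, $\mathcal{F}(\Delta)=\{f:T_\Sigma\to K\mid \forall t,s\in T_\Sigma,\ f(t)=f(s)\iff (t=s)\in\Delta\}$. For $\Gamma$ and agent $i$, $\Lambda_i^\Gamma$ is the set of formulas in $\Gamma$ of the forms $K_i^\theta\varphi$, $\neg K_i^\theta\varphi$, $Kv_i^\eta(t)$, $\neg Kv_i^\eta(t)$.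 For nonempty $S\subseteq\mathsf{Type}(\Sigma)$ with $\Gamma\in S$, the system $\mathsf{FC}(\Gamma,S,i)$ in real variables $z_{\Delta,f}$ ($\Delta\in S$, $f\in\mathcal{F}(\Delta)$) requires: $z_{\Delta,f}\ge0$; $\sum_{\Delta\in S}\sum_{f}z_{\Delta,f}=1$; for $K_i^\theta\varphi\in\Gamma$: $\sum_{\Delta\in S,\varphi\in\Delta}\sum_f z_{\Delta,f}\ge\theta$; for $\neg K_i^\theta\varphi\in\Gamma$: that sum $<\theta$; for $Kv_i^\eta(t)\in\Gamma$: there is $k\in K$ with $\sum_{\Delta\in S}\sum_{f(t)=k}z_{\Delta,f}\ge\eta$; for $\neg Kv_i^\eta(t)\in\Gamma$: for every $k\in K$, $\sum_{\Delta\in S}\sum_{f(t)=k}z_{\Delta,f}<\eta$. It is feasible if some real assignment satisfies all these requirements. Refinement. $\mathcal{T}_0=\mathsf{Type}(\Sigma)$, $\mathcal{T}_{\ell+1}=\{\Delta\in\mathcal{T}_\ell\mid \mathsf{FC}(\Delta,\mathcal{T}_\ell,i)\text{ feasible for all } i\in\mathcal{A}\}$; the decreasing sequence stabilizes at some $\mathcal{T}_{\ell_0}=:\mathsf{Type}^\ast(\Sigma)$. For each $\Gamma\in\mathsf{Type}(\Sigma)\setminus\mathsf{Type}^\ast(\Sigma)$, with $\Gamma\in\mathcal{T}_\ell\setminus\mathcal{T}_{\ell+1}$, fix an agent $i_\Gamma$ such that $\mathsf{FC}(\Gamma,\mathcal{T}_\ell,i_\Gamma)$ is infeasible. $\mathbf{PTKv}^\ast(\Sigma)$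 is $\mathbf{PTKv}^{+}$ plus the finitely many axioms $\neg\bigwedge\Lambda_{i_\Gamma}^\Gamma$ for $\Gamma\in\mathsf{Type}(\Sigma)\setminus\mathsf{Type}^\ast(\Sigma)$. *)

theory Defs
  imports Complex_Main "HOL-Library.FuncSet" "HOL-Library.Countable"
begin

text \<open>'p: propositional variables, 't: atomic terms, 'a: agents.
  Thresholds are rationals; membership in Theta_K resp. Theta_V^+ is enforced by wf_fm.\<close>

datatype ('p, 't, 'a) fm =
    Pv 'p
  | Eq 't 't
  | Neg "('p, 't, 'a) fm"
  | Imp "('p, 't, 'a) fm" "('p, 't, 'a) fm"
  | Kn 'a rat "('p, 't, 'a) fm"
  | KV 'a rat 't

abbreviation Conj :: "('p,'t,'a) fm \<Rightarrow> ('p,'t,'a) fm \<Rightarrow> ('p,'t,'a) fm" where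
  "Conj \<phi> \<psi> \<equiv> Neg (Imp \<phi> (Neg \<psi>))"
abbreviation Disj :: "('p,'t,'a) fm \<Rightarrow> ('p,'t,'a) fm \<Rightarrow> ('p,'t,'a) fm" where
  "Disj \<phi> \<psi> \<equiv> Imp (Neg \<phi>) \<psi>"
abbreviation Iff :: "('p,'t,'a) fm \<Rightarrow> ('p,'t,'a) fm \<Rightarrow> ('p,'t,'a) fm" where
  "Iff \<phi> \<psi> \<equiv> Conj (Imp \<phi> \<psi>) (Imp \<psi> \<phi>)"

fun wf_fm :: "('p,'t,'a) fm \<Rightarrow> bool" where
  "wf_fm (Pv p) = True"
| "wf_fm (Eq t s) = True"
| "wf_fm (Neg \<phi>) = wf_fm \<phi>"
| "wf_fm (Imp \<phi> \<psi>) = (wf_fm \<phi> \<and> wf_fm \<psi>)"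
| "wf_fm (Kn i \<theta> \<phi>) = (0 \<le> \<theta> \<and> \<theta> \<le> 1 \<and> wf_fm \<phi>)"
| "wf_fm (KV i \<eta> t) = (1/2 < \<eta> \<and> \<eta> \<le> 1)"

fun peval :: "(('p,'t,'a) fm \<Rightarrow> bool) \<Rightarrow> ('p,'t,'a) fm \<Rightarrow> bool" where
  "peval v (Neg \<phi>) = (\<not> peval v \<phi>)"
| "peval v (Imp \<phi> \<psi>) = (peval v \<phi> \<longrightarrow> peval v \<psi>)"
| "peval v \<phi> = v \<phi>"

definition taut :: "('p,'t,'a) fm \<Rightarrow> bool" where
  "taut \<phi> = (\<forall>v. peval v \<phi>)"

inductive_set ptkv_ax :: "('p,'t,'a) fm set" where
  A_taut: "taut \<phi> \<Longrightarrow> \<phi> \<in> ptkv_ax"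
| A_refl: "Eq t t \<in> ptkv_ax"
| A_sym: "Imp (Eq t s) (Eq s t) \<in> ptkv_ax"
| A_trans: "Imp (Conj (Eq t s) (Eq s u)) (Eq t u) \<in> ptkv_ax"
| A_subst: "Imp (Eq t s) (Iff (Eq t u) (Eq s u)) \<in> ptkv_ax"
| A_mono: "\<theta> \<le> \<theta>' \<Longrightarrow> Imp (Kn i \<theta>' \<phi>) (Kn i \<theta> \<phi>) \<in> ptkv_ax"
| A_K: "Imp (Kn i \<alpha> (Imp \<phi> \<psi>)) (Imp (Kn i \<beta> \<phi>) (Kn i (max 0 (\<alpha> + \<beta> - 1)) \<psi>)) \<in> ptkv_ax"
| A_D: "\<alpha> + \<beta> > 1 \<Longrightarrow> Imp (Kn i \<alpha> \<phi>) (Neg (Kn i \<beta> (Neg \<phi>))) \<in> ptkv_ax"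
| A_zero: "Kn i 0 \<phi> \<in> ptkv_ax"
| A_KEq: "Imp (Kn i 1 (Eq t s)) (Iff (Kn i \<theta> (Eq t u)) (Kn i \<theta> (Eq s u))) \<in> ptkv_ax"
| A_KvEq: "Imp (Kn i 1 (Eq t s)) (Iff (KV i \<eta> t) (KV i \<eta> s)) \<in> ptkv_ax"
| A_KIff: "Imp (Kn i 1 (Iff \<phi> \<psi>)) (Iff (Kn i \<theta> \<phi>) (Kn i \<theta> \<psi>)) \<in> ptkv_ax"
| A_add: "\<alpha> + \<beta> \<le> 1 \<Longrightarrow>
    Imp (Conj (Kn i \<alpha> \<phi>) (Conj (Kn i \<beta> \<psi>) (Kn i 1 (Neg (Conj \<phi> \<psi>)))))
        (Kn i (\<alpha> + \<beta>) (Disj \<phi> \<psi>)) \<in> ptkv_ax"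
| A_Kvmono: "\<zeta> \<le> \<eta> \<Longrightarrow> Imp (KV i \<eta> t) (KV i \<zeta> t) \<in> ptkv_ax"

inductive deriv :: "('p,'t,'a) fm set \<Rightarrow> ('p,'t,'a) fm \<Rightarrow> bool" for Ax where
  D_ax: "\<phi> \<in> ptkv_ax \<Longrightarrow> wf_fm \<phi> \<Longrightarrow> deriv Ax \<phi>"
| D_extra: "\<phi> \<in> Ax \<Longrightarrow> deriv Ax \<phi>"
| D_mp: "deriv Ax (Imp \<phi> \<psi>) \<Longrightarrow> deriv Ax \<phi> \<Longrightarrow> deriv Ax \<psi>"
| D_nec: "deriv Ax \<phi> \<Longrightarrow> 0 \<le> \<theta> \<Longrightarrow> \<theta> \<le> 1 \<Longrightarrow> deriv Ax (Kn i \<theta> \<phi>)"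

definition Top :: "('p,'t,'a) fm" where
  "Top = Imp (Pv undefined) (Pv undefined)"

fun conjL :: "('p,'t,'a) fm list \<Rightarrow> ('p,'t,'a) fm" where
  "conjL [] = Top"
| "conjL (\<phi> # \<phi>s) = Conj \<phi> (conjL \<phi>s)"

definition BigConj :: "('p,'t,'a) fm set \<Rightarrow> ('p,'t,'a) fm" where
  "BigConj \<Gamma> = conjL (SOME xs. set xs = \<Gamma> \<and> distinct xs)"

definition consistent :: "('p,'t,'a) fm set \<Rightarrow> ('p,'t,'a) fm set \<Rightarrow> bool" where
  "consistent Ax \<Gamma> = (\<not> deriv Ax (Neg (BigConj \<Gamma>)))"

fun subfms :: "('p,'t,'a) fm \<Rightarrow> ('p,'t,'a) fm set" where
  "subfms (Pv p) = {Pv p}"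
| "subfms (Eq t s) = {Eq t s}"
| "subfms (Neg \<phi>) = insert (Neg \<phi>) (subfms \<phi>)"
| "subfms (Imp \<phi> \<psi>) = insert (Imp \<phi> \<psi>) (subfms \<phi> \<union> subfms \<psi>)"
| "subfms (Kn i \<theta> \<phi>) = insert (Kn i \<theta> \<phi>) (subfms \<phi>)"
| "subfms (KV i \<eta> t) = {KV i \<eta> t}"

fun terms_fm :: "('p,'t,'a) fm \<Rightarrow> 't set" where
  "terms_fm (Pv p) = {}"
| "terms_fm (Eq t s) = {t, s}"
| "terms_fm (Neg \<phi>) = terms_fm \<phi>"
| "terms_fm (Imp \<phi> \<psi>) = terms_fm \<phi> \<union> terms_fm \<psi>"
| "terms_fm (Kn i \<theta> \<phi>) = terms_fm \<phi>"
| "terms_fm (KV i \<eta> t) = {t}"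

definition TS :: "('p,'t,'a) fm set \<Rightarrow> 't set" where
  "TS \<Sigma> = (\<Union>\<phi>\<in>\<Sigma>. terms_fm \<phi>)"

fun sneg :: "('p,'t,'a) fm \<Rightarrow> ('p,'t,'a) fm" where
  "sneg (Neg \<psi>) = \<psi>"
| "sneg \<phi> = Neg \<phi>"

text \<open>Finiteness of the threshold set is automatic from finiteness of Sigma.\<close>
definition finite_closure :: "('p,'t,'a) fm set \<Rightarrow> bool" where
  "finite_closure \<Sigma> \<longleftrightarrow>
     finite \<Sigma> \<and> (\<forall>\<phi>\<in>\<Sigma>. wf_fm \<phi>) \<and>
     (\<forall>\<phi>\<in>\<Sigma>. subfms \<phi> \<subseteq> \<Sigma>) \<and>
     (\<forall>\<phi>\<in>\<Sigma>. Neg \<phi> \<in> \<Sigma> \<or> (\<exists>\<psi>. \<phi> = Neg \<psi> \<and> \<psi> \<in> \<Sigma>)) \<and>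
     (\<forall>t\<in>TS \<Sigma>. \<forall>s\<in>TS \<Sigma>. Eq t s \<in> \<Sigma> \<and> Neg (Eq t s) \<in> \<Sigma>)"

definition Types :: "('p,'t,'a) fm set \<Rightarrow> ('p,'t,'a) fm set set" where
  "Types \<Sigma> = {\<Gamma>. \<Gamma> \<subseteq> \<Sigma> \<and> consistent {} \<Gamma> \<and> (\<forall>\<phi>\<in>\<Sigma>. \<phi> \<in> \<Gamma> \<or> sneg \<phi> \<in> \<Gamma>)}"

definition Fs :: "('p,'t,'a) fm set \<Rightarrow> ('p,'t,'a) fm set \<Rightarrow> ('t \<Rightarrow> nat) set" where
  "Fs \<Sigma> \<Delta> = {f \<in> TS \<Sigma> \<rightarrow>\<^sub>E {1..card (TS \<Sigma>)}.
                 \<forall>t\<in>TS \<Sigma>. \<forall>s\<in>TS \<Sigma>. (f t = f s) \<longleftrightarrow> Eq t s \<in> \<Delta>}"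

definition FC_feasible ::
  "('p,'t,'a) fm set \<Rightarrow> ('p,'t,'a) fm set \<Rightarrow> ('p,'t,'a) fm set set \<Rightarrow> 'a \<Rightarrow> bool" where
  "FC_feasible \<Sigma> \<Gamma> S i \<longleftrightarrow>
    (let I = Sigma S (Fs \<Sigma>); Kset = {1..card (TS \<Sigma>)} in
     \<exists>z :: ('p,'t,'a) fm set \<times> ('t \<Rightarrow> nat) \<Rightarrow> real.
       (\<forall>x\<in>I. 0 \<le> z x) \<and>
       sum z I = 1 \<and>
       (\<forall>\<theta> \<phi>. Kn i \<theta> \<phi> \<in> \<Gamma> \<longrightarrow> sum z {x\<in>I. \<phi> \<in> fst x} \<ge> of_rat \<theta>) \<and>
       (\<forall>\<theta> \<phi>. Neg (Kn i \<theta> \<phi>) \<in> \<Gamma> \<longrightarrow> sum z {x\<in>I. \<phi> \<in> fst x} < of_rat \<theta>) \<and>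
       (\<forall>\<eta> t. KV i \<eta> t \<in> \<Gamma> \<longrightarrow> (\<exists>k\<in>Kset. sum z {x\<in>I. snd x t = k} \<ge> of_rat \<eta>)) \<and>
       (\<forall>\<eta> t. Neg (KV i \<eta> t) \<in> \<Gamma> \<longrightarrow> (\<forall>k\<in>Kset. sum z {x\<in>I. snd x t = k} < of_rat \<eta>)))"

primrec Tref :: "('p,'t,'a) fm set \<Rightarrow> nat \<Rightarrow> ('p,'t,'a) fm set set" where
  "Tref \<Sigma> 0 = Types \<Sigma>"
| "Tref \<Sigma> (Suc l) = {\<Delta> \<in> Tref \<Sigma> l. \<forall>i::'a. FC_feasible \<Sigma> \<Delta> (Tref \<Sigma> l) i}"

definition TypeStar :: "('p,'t,'a) fm set \<Rightarrow> ('p,'t,'a) fm set set" where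
  "TypeStar \<Sigma> = Tref \<Sigma> (LEAST l. Tref \<Sigma> (Suc l) = Tref \<Sigma> l)"

definition Lambda :: "'a \<Rightarrow> ('p,'t,'a) fm set \<Rightarrow> ('p,'t,'a) fm set" where
  "Lambda i \<Gamma> = {\<phi>\<in>\<Gamma>. \<exists>\<theta> \<psi> \<eta> t. \<phi> = Kn i \<theta> \<psi> \<or> \<phi> = Neg (Kn i \<theta> \<psi>) \<or>
                                   \<phi> = KV i \<eta> t \<or> \<phi> = Neg (KV i \<eta> t)}"

definition good_choice :: "('p,'t,'a) fm set \<Rightarrow> (('p,'t,'a) fm set \<Rightarrow> 'a) \<Rightarrow> bool" where
  "good_choice \<Sigma> ig \<longleftrightarrow>
     (\<forall>\<Gamma>\<in>Types \<Sigma> - TypeStar \<Sigma>. \<exists>l. \<Gamma> \<in> Tref \<Sigma> l \<and> \<Gamma> \<notin> Tref \<Sigma> (Suc l) \<and>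
                                     \<not> FC_feasible \<Sigma> \<Gamma> (Tref \<Sigma> l) (ig \<Gamma>))"

definition StarAx :: "('p,'t,'a) fm set \<Rightarrow> (('p,'t,'a) fm set \<Rightarrow> 'a) \<Rightarrow> ('p,'t,'a) fm set" where
  "StarAx \<Sigma> ig = {Neg (BigConj (Lambda (ig \<Gamma>) \<Gamma>)) | \<Gamma>. \<Gamma> \<in> Types \<Sigma> - TypeStar \<Sigma>}"

end

theory Submission
  imports Defs
begin

text \<open>Every saturated subset \<Gamma> of \<Sigma> that contains \<chi> is refuted by PTKv*(\<Sigma>): if \<Gamma> is
  PTKv+-inconsistent this holds already in PTKv+, and otherwise \<Gamma> is a type outside Type*(\<Sigma>),
  so PTKv*(\<Sigma>) has the axiom \<not>\<And>\<Lambda>, and \<Lambda> \<subseteq> \<Gamma>. Since any valuation making \<chi> true makes the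
  saturated set of its true members of \<Sigma> true, \<not>\<chi> is a propositional consequence of these
  refutations.\<close>

definition saturated :: "('p,'t,'a) fm set \<Rightarrow> ('p,'t,'a) fm set \<Rightarrow> bool" where
  "saturated \<Sigma> \<Gamma> \<longleftrightarrow> \<Gamma> \<subseteq> \<Sigma> \<and> (\<forall>\<phi>\<in>\<Sigma>. \<phi> \<in> \<Gamma> \<or> sneg \<phi> \<in> \<Gamma>)"

lemma Types_iff_saturated_consistent:
  "\<Gamma> \<in> Types \<Sigma> \<longleftrightarrow> saturated \<Sigma> \<Gamma> \<and> consistent {} \<Gamma>"
  unfolding Types_def saturated_def by auto

lemma deriv_mono: "deriv Ax \<phi> \<Longrightarrow> Ax \<subseteq> Ax' \<Longrightarrow> deriv Ax' \<phi>"
  by (induction rule: deriv.induct) (auto intro: deriv.intros)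

lemma peval_conjL: "peval v (conjL xs) \<longleftrightarrow> (\<forall>x\<in>set xs. peval v x)"
  by (induction xs) (auto simp: Top_def)

lemma wf_conjL: "wf_fm (conjL xs) \<longleftrightarrow> (\<forall>x\<in>set xs. wf_fm x)"
  by (induction xs) (auto simp: Top_def)

lemma set_BigConj_list: "finite \<Gamma> \<Longrightarrow> set (SOME xs. set xs = \<Gamma> \<and> distinct xs) = \<Gamma>"
  using someI_ex[OF finite_distinct_list] by blast

lemma peval_BigConj: "finite \<Gamma> \<Longrightarrow> peval v (BigConj \<Gamma>) \<longleftrightarrow> (\<forall>x\<in>\<Gamma>. peval v x)"
  unfolding BigConj_def by (simp add: peval_conjL set_BigConj_list)

lemma wf_BigConj: "finite \<Gamma> \<Longrightarrow> wf_fm (BigConj \<Gamma>) \<longleftrightarrow> (\<forall>x\<in>\<Gamma>. wf_fm x)"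
  unfolding BigConj_def by (simp add: wf_conjL set_BigConj_list)

lemma deriv_propositional_consequence:
  assumes "finite H"
    and "\<forall>h\<in>H. deriv Ax h \<and> wf_fm h"
    and "wf_fm b"
    and "\<forall>v. (\<forall>h\<in>H. peval v h) \<longrightarrow> peval v b"
  shows "deriv Ax b"
  using assms
proof (induction H arbitrary: b rule: finite_induct)
  case empty
  then show ?case by (auto intro!: deriv.D_ax ptkv_ax.A_taut simp: taut_def)
next
  case (insert h H)
  have "deriv Ax (Imp h b)"
    using insert.prems by (intro insert.IH) auto
  then show ?case
    using insert.prems by (auto intro: deriv.D_mp)
qed

lemma deriv_Neg_BigConj_superset:
  assumes "deriv Ax (Neg (BigConj \<Delta>))"
    and "\<Delta> \<subseteq> \<Gamma>" "finite \<Gamma>" "\<forall>\<phi>\<in>\<Gamma>. wf_fm \<phi>"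
  shows "deriv Ax (Neg (BigConj \<Gamma>))"
proof -
  have "finite \<Delta>"
    using assms(2,3) by (rule finite_subset)
  then show ?thesis
    using assms
    by (intro deriv_propositional_consequence[of "{Neg (BigConj \<Delta>)}"])
       (auto simp: wf_BigConj peval_BigConj)
qed

lemma saturated_true_members:
  assumes "finite_closure \<Sigma>"
  shows "saturated \<Sigma> {\<phi>\<in>\<Sigma>. peval v \<phi>}"
  unfolding saturated_def
proof (intro conjI ballI)
  fix \<phi> assume "\<phi> \<in> \<Sigma>"
  show "\<phi> \<in> {\<phi>\<in>\<Sigma>. peval v \<phi>} \<or> sneg \<phi> \<in> {\<phi>\<in>\<Sigma>. peval v \<phi>}"
  proof (cases \<phi>)
    case (Neg \<psi>)
    have "\<psi> \<in> subfms \<phi>"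
      using Neg by (cases \<psi>) auto
    then have "\<psi> \<in> \<Sigma>"
      using assms \<open>\<phi> \<in> \<Sigma>\<close> unfolding finite_closure_def by blast
    then show ?thesis
      using Neg \<open>\<phi> \<in> \<Sigma>\<close> by auto
  qed (use assms \<open>\<phi> \<in> \<Sigma>\<close> in \<open>auto simp: finite_closure_def\<close>)
qed auto

lemma deriv_StarAx_Neg_BigConj:
  assumes "finite_closure \<Sigma>" "saturated \<Sigma> \<Gamma>" "\<Gamma> \<notin> TypeStar \<Sigma>"
  shows "deriv (StarAx \<Sigma> ig) (Neg (BigConj \<Gamma>))"
proof (cases "consistent {} \<Gamma>")
  case True
  then have "\<Gamma> \<in> Types \<Sigma> - TypeStar \<Sigma>"
    using assms(2,3) Types_iff_saturated_consistent by blast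
  then have "deriv (StarAx \<Sigma> ig) (Neg (BigConj (Lambda (ig \<Gamma>) \<Gamma>)))"
    unfolding StarAx_def by (blast intro: deriv.D_extra)
  moreover have "Lambda (ig \<Gamma>) \<Gamma> \<subseteq> \<Gamma>"
    unfolding Lambda_def by auto
  moreover have "finite \<Gamma>" "\<forall>\<phi>\<in>\<Gamma>. wf_fm \<phi>"
    using assms(1,2) finite_subset unfolding finite_closure_def saturated_def by auto
  ultimately show ?thesis
    by (rule deriv_Neg_BigConj_superset)
next
  case False
  then show ?thesis
    unfolding consistent_def by (auto intro: deriv_mono)
qed

lemma deriv_Neg_if_saturated_refuted:
  assumes "finite_closure \<Sigma>" "\<chi> \<in> \<Sigma>"
    and refuted: "\<And>\<Gamma>. saturated \<Sigma> \<Gamma> \<Longrightarrow> \<chi> \<in> \<Gamma> \<Longrightarrow> deriv Ax (Neg (BigConj \<Gamma>))"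
  shows "deriv Ax (Neg \<chi>)"
proof -
  have fin: "finite \<Sigma>" and wf: "\<forall>\<phi>\<in>\<Sigma>. wf_fm \<phi>"
    using assms(1) unfolding finite_closure_def by auto
  define H where "H = (\<lambda>\<Gamma>. Neg (BigConj \<Gamma>)) ` {\<Gamma>. saturated \<Sigma> \<Gamma> \<and> \<chi> \<in> \<Gamma>}"
  have "finite H"
    unfolding H_def saturated_def using fin by (auto intro: finite_subset[of _ "Pow \<Sigma>"])
  moreover have "\<forall>h\<in>H. deriv Ax h \<and> wf_fm h"
  proof
    fix h assume "h \<in> H"
    then obtain \<Gamma> where \<Gamma>: "saturated \<Sigma> \<Gamma>" "\<chi> \<in> \<Gamma>" and h: "h = Neg (BigConj \<Gamma>)"
      unfolding H_def by blast
    then have "finite \<Gamma>" "\<forall>\<phi>\<in>\<Gamma>. wf_fm \<phi>"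
      using fin wf finite_subset unfolding saturated_def by auto
    then show "deriv Ax h \<and> wf_fm h"
      using refuted \<Gamma> h by (simp add: wf_BigConj)
  qed
  moreover have "peval v (Neg \<chi>)" if "\<forall>h\<in>H. peval v h" for v
  proof (rule ccontr)
    assume "\<not> peval v (Neg \<chi>)"
    then have "saturated \<Sigma> {\<phi>\<in>\<Sigma>. peval v \<phi>} \<and> \<chi> \<in> {\<phi>\<in>\<Sigma>. peval v \<phi>}"
      using saturated_true_members assms(1,2) by auto
    then have "\<not> peval v (BigConj {\<phi>\<in>\<Sigma>. peval v \<phi>})"
      using that unfolding H_def by auto
    then show False
      using fin by (simp add: peval_BigConj)
  qed
  ultimately show ?thesis
    using wf assms(2) by (intro deriv_propositional_consequence) auto
qed

theorem lemma8:
  fixes \<Sigma> :: "('p::countable, 't::countable, 'a::finite) fm set"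
    and \<chi> :: "('p, 't, 'a) fm"
    and ig :: "('p, 't, 'a) fm set \<Rightarrow> 'a"
  assumes "finite_closure \<Sigma>"
    and "\<chi> \<in> \<Sigma>"
    and "good_choice \<Sigma> ig"
    and "\<not> deriv (StarAx \<Sigma> ig) (Neg \<chi>)"
  shows "\<exists>\<Gamma>\<in>TypeStar \<Sigma>. \<chi> \<in> \<Gamma>"
proof (rule ccontr)
  assume "\<not> (\<exists>\<Gamma>\<in>TypeStar \<Sigma>. \<chi> \<in> \<Gamma>)"
  then have "deriv (StarAx \<Sigma> ig) (Neg (BigConj \<Gamma>))" if "saturated \<Sigma> \<Gamma>" "\<chi> \<in> \<Gamma>" for \<Gamma>
    using deriv_StarAx_Neg_BigConj[OF assms(1)] that by blast
  then have "deriv (StarAx \<Sigma> ig) (Neg \<chi>)"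
    using deriv_Neg_if_saturated_refuted[OF assms(1,2)] by blast
  with assms(4) show False ..
qed

end
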